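(* Let $\mathcal G$ be a connected rank-3 tensor Feynman graph as in the context, with $N_{\rm ext}$ external legs. Let \[ \omega_{\deg}(\mathcal G)=-(V-1)+\tfrac12F_{\rm int}(\mathcal G). \] Then: \begin{itemize} \item if $N_{\rm ext}\ge6$, then $\omega_{\deg}(\mathcal G)\le-N_{\rm ext}/12$; \item if $N_{\rm ext}=4$, then $\omega_{\deg}(\mathcal G)\le0$; \item if $N_{\rm ext}=2$, then $\omega_{\deg}(\mathcal G)\le1$. \end{itemize}
   Context: Bubbles. Use colors $1,2,3$ for bubble edges and color $0$ for propagator lines. The tetrahedral bubble $\mathbf b_+$ is $K_4$ on $w_1,\dots,w_4$ with the following colored edges: \begin{itemize} \item $w_1w_2$ and $w_3w_4$ of color 1; \item $w_1w_3$ and $w_2w_4$ of color 2; \item $w_1w_4$ and $w_2w_3$ of color 3. \end{itemize} For $c\in\{1,2,3\}$, the melonic bubble $\mathbf b_c$ has vertices $w_1,\dots,w_4$ and the following edges: \begin{itemize} \item $w_1w_2$ doubled, carrying the two colors of $\{1,2,3\}\setminus\{c\}$; \item $w_3w_4$ doubled, carrying the two colors of $\{1,2,3\}\setminus\{c\}$; \item single edges $w_2w_3$ and $w_4w_1$ of color $c$. \end{itemize} Graphs. A graph $\mathcal G$ consists of the following data: \begin{itemize} \item $V=V_++V_m$ interaction vertices (copies of $\mathbf b_+$, resp. of some $\mathbf b_c$); \item $L$ internal color-0 lines joining bubble vertices, each bubble vertex incident to at most one line; \item a color-0 external leg at each bubble vertex not incident to a line. \end{itemize} Let $N_{\rm ext}$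 be the number of external legs. The colored extension $\mathcal G_{\rm col}$ is the resulting 4-edge-colored graph. Connected means $\mathcal G_{\rm col}$ is connected. Faces. A face of color $c\in\{1,2,3\}$ is a connected component of the subgraph of $\mathcal G_{\rm col}$ formed by the color-0 edges and half-edges and the color-$c$ edges. It is internal if it is a cycle, and external if it is a path between two external legs. $F_{\rm int}(\mathcal G)$ is the number of internal faces. *)

theory Defs
  imports Complex_Main
begin

text \<open>Bubble vertices w1..w4 are encoded locally as 0..3. A bubble type is a nat:
  0 = tetrahedral bubble b_+, c \<in> {1,2,3} = melonic bubble b_c.
  A graph is given by V (number of bubbles, indexed 0..<V), a typing function bt,
  and a set L of internal color-0 lines (two-element sets of bubble vertices).\<close>

definition colors :: "nat set" where "colors = {1,2,3}"

definition tet_edges :: "nat \<Rightarrow> nat set set" where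
  "tet_edges c = (if c = 1 then {{0,1},{2,3}}
                  else if c = 2 then {{0,2},{1,3}}
                  else if c = 3 then {{0,3},{1,2}} else {})"

definition mel_edges :: "nat \<Rightarrow> nat \<Rightarrow> nat set set" where
  "mel_edges t c = (if c \<notin> colors then {}
                    else if c = t then {{1,2},{3,0}}
                    else {{0,1},{2,3}})"

definition bubble_edges :: "nat \<Rightarrow> nat \<Rightarrow> nat set set" where
  "bubble_edges t c = (if t = 0 then tet_edges c else mel_edges t c)"

definition bverts :: "nat \<Rightarrow> (nat \<times> nat) set" where
  "bverts V = {0..<V} \<times> {0..<4}"

definition color_edges :: "nat \<Rightarrow> (nat \<Rightarrow> nat) \<Rightarrow> nat \<Rightarrow> (nat \<times> nat) set set" where
  "color_edges V bt c = {{(i,a),(i,b)} | i a b. i < V \<and> {a,b} \<in> bubble_edges (bt i) c}"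

definition wf_graph :: "nat \<Rightarrow> (nat \<Rightarrow> nat) \<Rightarrow> (nat \<times> nat) set set \<Rightarrow> bool" where
  "wf_graph V bt L \<longleftrightarrow>
     (\<forall>i<V. bt i \<in> {0,1,2,3}) \<and>
     (\<forall>l\<in>L. l \<subseteq> bverts V \<and> card l = 2) \<and>
     (\<forall>l1\<in>L. \<forall>l2\<in>L. l1 \<inter> l2 \<noteq> {} \<longrightarrow> l1 = l2)"

text \<open>Bubble vertices carrying an external leg: those not incident to a line.\<close>
definition ext_verts :: "nat \<Rightarrow> (nat \<times> nat) set set \<Rightarrow> (nat \<times> nat) set" where
  "ext_verts V L = bverts V - \<Union>L"

definition N_ext :: "nat \<Rightarrow> (nat \<times> nat) set set \<Rightarrow> nat" where
  "N_ext V L = card (ext_verts V L)"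

text \<open>Connectedness of the colored extension G_col (external legs are pendant
  half-edges and do not affect connectivity).\<close>
definition col_adj :: "nat \<Rightarrow> (nat \<Rightarrow> nat) \<Rightarrow> (nat \<times> nat) set set \<Rightarrow> (nat \<times> nat) \<Rightarrow> (nat \<times> nat) \<Rightarrow> bool" where
  "col_adj V bt L x y \<longleftrightarrow> {x,y} \<in> L \<or> (\<exists>c\<in>colors. {x,y} \<in> color_edges V bt c)"

definition connected_graph :: "nat \<Rightarrow> (nat \<Rightarrow> nat) \<Rightarrow> (nat \<times> nat) set set \<Rightarrow> bool" where
  "connected_graph V bt L \<longleftrightarrow>
     (\<forall>x\<in>bverts V. \<forall>y\<in>bverts V. (col_adj V bt L)\<^sup>*\<^sup>* x y)"

definition face_adj :: "nat \<Rightarrow> (nat \<Rightarrow> nat) \<Rightarrow> (nat \<times> nat) set set \<Rightarrow> nat \<Rightarrow> (nat \<times> nat) \<Rightarrow> (nat \<times> nat) \<Rightarrow> bool" where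
  "face_adj V bt L c x y \<longleftrightarrow> {x,y} \<in> L \<or> {x,y} \<in> color_edges V bt c"

definition faces :: "nat \<Rightarrow> (nat \<Rightarrow> nat) \<Rightarrow> (nat \<times> nat) set set \<Rightarrow> nat \<Rightarrow> (nat \<times> nat) set set" where
  "faces V bt L c = {{y \<in> bverts V. (face_adj V bt L c)\<^sup>*\<^sup>* x y} | x. x \<in> bverts V}"

text \<open>A face is internal (a cycle) iff it contains no external leg, i.e. all of its
  vertices are incident to an internal line; otherwise it is a path between two legs.\<close>
definition internal_faces :: "nat \<Rightarrow> (nat \<Rightarrow> nat) \<Rightarrow> (nat \<times> nat) set set \<Rightarrow> nat \<Rightarrow> (nat \<times> nat) set set" where
  "internal_faces V bt L c = {f \<in> faces V bt L c. f \<inter> ext_verts V L = {}}"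

definition F_int :: "nat \<Rightarrow> (nat \<Rightarrow> nat) \<Rightarrow> (nat \<times> nat) set set \<Rightarrow> nat" where
  "F_int V bt L = (\<Sum>c\<in>colors. card (internal_faces V bt L c))"

definition omega_deg :: "nat \<Rightarrow> (nat \<Rightarrow> nat) \<Rightarrow> (nat \<times> nat) set set \<Rightarrow> real" where
  "omega_deg V bt L = - (real V - 1) + real (F_int V bt L) / 2"

end

theory Submission
  imports Defs "HOL-Library.Disjoint_Sets" "HOL-Library.Z2"
begin

text \<open>Let \<open>K\<close> be the number of connected components of \<open>G\<^sub>c\<^sub>o\<^sub>l\<close> and \<open>K\<^sub>0\<close> the number of
  those carrying no external leg. The inequality \<open>F\<^sub>i\<^sub>n\<^sub>t + 2V \<le> 2|L| + 2K + K\<^sub>0\<close> is proved by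
  deleting the internal lines one at a time; without lines every bubble is a component of its
  own. Putting back a line between two external legs \<open>x, y\<close> closes at most one face of each
  colour. Every face contains an even number of external legs, so a line joining two different
  components closes no face; otherwise \<open>K\<close> is unchanged, and the line can be chosen so that
  some face through \<open>x\<close> stays open or the component of \<open>x\<close> becomes closed. For a connected
  graph with external legs, \<open>K = 1\<close>, \<open>K\<^sub>0 = 0\<close> and \<open>2|L| = 4V - N\<^sub>e\<^sub>x\<^sub>t\<close>, whence
  \<open>F\<^sub>i\<^sub>n\<^sub>t + N\<^sub>e\<^sub>x\<^sub>t \<le> 2V + 2\<close>, i.e. \<open>\<omega>\<^sub>d\<^sub>e\<^sub>g \<le> 2 - N\<^sub>e\<^sub>x\<^sub>t/2\<close>.\<close>

definition component :: "'a set \<Rightarrow> ('a \<Rightarrow> 'a \<Rightarrow> bool) \<Rightarrow> 'a \<Rightarrow> 'a set" where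
  "component S R x = {y \<in> S. R\<^sup>*\<^sup>* x y}"

definition components :: "'a set \<Rightarrow> ('a \<Rightarrow> 'a \<Rightarrow> bool) \<Rightarrow> 'a set set" where
  "components S R = component S R ` S"

definition closed_components :: "'a set \<Rightarrow> ('a \<Rightarrow> 'a \<Rightarrow> bool) \<Rightarrow> 'a set \<Rightarrow> 'a set set" where
  "closed_components S R E = {f \<in> components S R. f \<inter> E = {}}"

lemma finite_components: "finite S \<Longrightarrow> finite (components S R)"
  by (simp add: components_def)

lemma finite_closed_components: "finite S \<Longrightarrow> finite (closed_components S R E)"
  by (simp add: closed_components_def finite_components)

lemma closed_components_self: "closed_components S R S = {}"
  by (auto simp: closed_components_def components_def component_def)

lemma component_eq:
  assumes "symp R" "R\<^sup>*\<^sup>* x y"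
  shows "component S R x = component S R y"
proof -
  have "R\<^sup>*\<^sup>* y x" using assms by (meson sympD symp_rtranclp)
  then show ?thesis using assms(2) unfolding component_def by (auto intro: rtranclp_trans)
qed

locale edge_extension =
  fixes S :: "'a set" and R R' :: "'a \<Rightarrow> 'a \<Rightarrow> bool" and a b :: 'a
  assumes symp: "symp R"
    and extends: "\<And>u v. R' u v \<longleftrightarrow> R u v \<or> {u,v} = {a,b}"
    and a_in: "a \<in> S" and b_in: "b \<in> S"
begin

lemma symp_extended: "symp R'"
  using symp by (auto simp: symp_def extends insert_commute)

lemma rtranclp_extended: "R\<^sup>*\<^sup>* u v \<Longrightarrow> R'\<^sup>*\<^sup>* u v"
  by (metis extends mono_rtranclp)

lemma rtranclp_extended_cases: "R'\<^sup>*\<^sup>* w v \<Longrightarrow> R\<^sup>*\<^sup>* w v \<or> R\<^sup>*\<^sup>* w a \<or> R\<^sup>*\<^sup>* w b"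
proof (induction rule: rtranclp_induct)
  case (step v v')
  then show ?case
    by (metis extends doubleton_eq_iff rtranclp.rtrancl_into_rtrancl)
qed simp

lemma component_extended_eq:
  "\<not> R\<^sup>*\<^sup>* w a \<Longrightarrow> \<not> R\<^sup>*\<^sup>* w b \<Longrightarrow> component S R' w = component S R w"
  unfolding component_def using rtranclp_extended rtranclp_extended_cases by blast

lemma component_extended_a: "component S R' a \<in> components S R'" "a \<in> component S R' a"
  using a_in by (auto simp: components_def component_def)

abbreviation untouched :: "'a set set" where
  "untouched \<equiv> {f \<in> components S R. a \<notin> f \<and> b \<notin> f}"

lemma untouched_subset: "untouched \<subseteq> components S R'"
proof
  fix f assume f: "f \<in> untouched"
  then obtain w where w: "w \<in> S" "f = component S R w" by (auto simp: components_def)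
  then have "\<not> R\<^sup>*\<^sup>* w a" "\<not> R\<^sup>*\<^sup>* w b" using f a_in b_in by (auto simp: component_def)
  then show "f \<in> components S R'" using w component_extended_eq by (auto simp: components_def)
qed

lemma components_extended_subset: "components S R' \<subseteq> insert (component S R' a) untouched"
proof
  fix f assume "f \<in> components S R'"
  then obtain w where w: "w \<in> S" "f = component S R' w" by (auto simp: components_def)
  show "f \<in> insert (component S R' a) untouched"
  proof (cases "R\<^sup>*\<^sup>* w a \<or> R\<^sup>*\<^sup>* w b")
    case True
    then have "R'\<^sup>*\<^sup>* w a"
      using rtranclp_extended extends
      by (metis (full_types) rtranclp.rtrancl_into_rtrancl insert_commute)
    then show ?thesis using w component_eq[OF symp_extended] by blast
  next
    case False
    then show ?thesis
      using w a_in b_in component_extended_eq by (auto simp: components_def component_def)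
  qed
qed

lemma components_subset:
  "components S R \<subseteq> insert (component S R a) (insert (component S R b) untouched)"
proof
  fix f assume "f \<in> components S R"
  then obtain w where w: "w \<in> S" "f = component S R w" by (auto simp: components_def)
  then show "f \<in> insert (component S R a) (insert (component S R b) untouched)"
    using a_in b_in component_eq[OF symp, of w]
    by (cases "R\<^sup>*\<^sup>* w a \<or> R\<^sup>*\<^sup>* w b") (auto simp: components_def component_def)
qed

lemma card_untouched_less:
  assumes "finite S"
  shows "card untouched < card (components S R')"
proof -
  have "component S R' a \<notin> untouched" using component_extended_a by blast
  then have "card untouched < card (insert (component S R' a) untouched)"
    using finite_components[OF assms] by simp
  also have "\<dots> \<le> card (components S R')"
    using untouched_subset component_extended_a finite_components[OF assms]
    by (intro card_mono) auto
  finally show ?thesis .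
qed

lemma card_components_le_Suc:
  assumes "finite S"
  shows "card (components S R) \<le> card (components S R') + 1"
proof -
  have "card (components S R) \<le> card (insert (component S R a) (insert (component S R b) untouched))"
    using components_subset finite_components[OF assms] by (intro card_mono) auto
  also have "\<dots> \<le> card untouched + 2"
    using finite_components[OF assms] by (simp add: card_insert_if)
  finally show ?thesis using card_untouched_less[OF assms] by simp
qed

lemma card_components_le_if_connected:
  assumes "finite S" "R\<^sup>*\<^sup>* a b"
  shows "card (components S R) \<le> card (components S R')"
proof -
  have "component S R b = component S R a" using component_eq[OF symp assms(2)] by simp
  then have "card (components S R) \<le> card (insert (component S R a) untouched)"
    using components_subset finite_components[OF assms(1)] by (intro card_mono) auto
  also have "\<dots> \<le> card untouched + 1"
    using finite_components[OF assms(1)] by (simp add: card_insert_if)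
  finally show ?thesis using card_untouched_less[OF assms(1)] by simp
qed

lemma card_closed_components_extended_ge:
  assumes "finite S" "a \<in> E" "b \<in> E"
  shows "card (closed_components S R E) + of_bool (component S R' a \<inter> (E - {a,b}) = {})
         \<le> card (closed_components S R' (E - {a,b}))"
proof -
  have sub: "closed_components S R E \<subseteq> closed_components S R' (E - {a,b})"
    using untouched_subset assms unfolding closed_components_def by blast
  have new: "component S R' a \<notin> closed_components S R E"
    using component_extended_a assms unfolding closed_components_def by blast
  note fin = finite_closed_components[OF assms(1)]
  show ?thesis
  proof (cases "component S R' a \<inter> (E - {a,b}) = {}")
    case True
    then have "insert (component S R' a) (closed_components S R E)
                 \<subseteq> closed_components S R' (E - {a,b})"
      using sub component_extended_a unfolding closed_components_def by blast
    from card_mono[OF fin this] show ?thesis using True new fin by simp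
  next
    case False
    then show ?thesis using card_mono[OF fin sub] by simp
  qed
qed

lemma card_closed_components_extended_le:
  assumes "finite S"
  shows "card (closed_components S R' (E - {a,b}))
         \<le> card (closed_components S R E) + of_bool (component S R' a \<inter> (E - {a,b}) = {})"
proof -
  note fin = finite_closed_components[OF assms]
  have sub: "closed_components S R' (E - {a,b}) \<subseteq> insert (component S R' a) (closed_components S R E)"
    using components_extended_subset unfolding closed_components_def by blast
  show ?thesis
  proof (cases "component S R' a \<inter> (E - {a,b}) = {}")
    case True
    have "card (closed_components S R' (E - {a,b}))
            \<le> card (insert (component S R' a) (closed_components S R E))"
      using fin sub by (intro card_mono) auto
    also have "\<dots> \<le> card (closed_components S R E) + 1" using fin by (simp add: card_insert_if)
    finally show ?thesis using True by simp
  next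
    case False
    then have "closed_components S R' (E - {a,b}) \<subseteq> closed_components S R E"
      using sub unfolding closed_components_def by blast
    then show ?thesis using card_mono[OF fin] False by simp
  qed
qed

end

lemma even_card_involution:
  assumes "finite X" "\<And>x. x \<in> X \<Longrightarrow> h x \<in> X" "\<And>x. x \<in> X \<Longrightarrow> h (h x) = x"
    and "\<And>x. x \<in> X \<Longrightarrow> h x \<noteq> x"
  shows "even (card X)"
proof -
  have "(\<Sum>x\<in>X. 1 :: bit) = 0"
    by (rule sum_involution_eq_0[where h = h]) (use assms in auto)
  then have "of_nat (card X) = (0 :: bit)" by simp
  then show ?thesis by (metis even_of_nat even_zero)
qed

text \<open>Each colour class of a bubble is a perfect matching of \<open>w\<^sub>1, \<dots>, w\<^sub>4\<close> (encoded as
  \<open>0, \<dots>, 3\<close>), namely \<open>a \<mapsto> a XOR k\<close> for \<open>k \<in> {1,2,3}\<close>.\<close>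
definition mate :: "nat \<Rightarrow> nat \<Rightarrow> nat \<Rightarrow> nat" where
  "mate t c a = xor a (if t = 0 then c else if c = t then 3 else 1)"

lemma mate_iff:
  assumes "c \<in> colors" "a < 4"
  shows "{a,b} \<in> bubble_edges t c \<longleftrightarrow> b = mate t c a"
proof -
  have "a \<in> {0,1,2,3}" "c \<in> {1,2,3}" using assms by (auto simp: colors_def)
  then show ?thesis
    using assms(1)
    by (elim insertE emptyE)
      (auto simp: bubble_edges_def tet_edges_def mel_edges_def mate_def doubleton_eq_iff)
qed

lemma mate_mate: "mate t c (mate t c a) = a"
  by (simp add: mate_def xor.assoc)

lemma mate_less_4_and_neq:
  assumes "c \<in> colors" "a < 4"
  shows "mate t c a < 4" "mate t c a \<noteq> a"
proof -
  have a: "a \<in> {0,1,2,3}" and c: "c \<in> {1,2,3}" using assms by (auto simp: colors_def)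
  then show "mate t c a < 4" "mate t c a \<noteq> a" by (auto simp: mate_def)
qed

lemma bubble_edges_subset: "e \<in> bubble_edges t c \<Longrightarrow> e \<subseteq> {0,1,2,3}"
  by (auto simp: bubble_edges_def tet_edges_def mel_edges_def split: if_splits)

definition bubble_mate :: "(nat \<Rightarrow> nat) \<Rightarrow> nat \<Rightarrow> nat \<times> nat \<Rightarrow> nat \<times> nat" where
  "bubble_mate bt c z = (fst z, mate (bt (fst z)) c (snd z))"

lemma bubble_mate:
  assumes "c \<in> colors" "z \<in> bverts V"
  shows "bubble_mate bt c z \<in> bverts V" "bubble_mate bt c z \<noteq> z"
    "bubble_mate bt c (bubble_mate bt c z) = z"
  using assms mate_less_4_and_neq[OF assms(1)]
  by (auto simp: bubble_mate_def bverts_def prod_eq_iff mate_mate)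

lemma color_edge_iff:
  assumes "c \<in> colors"
  shows "{z,w} \<in> color_edges V bt c \<longleftrightarrow> z \<in> bverts V \<and> w = bubble_mate bt c z"
proof
  assume "{z,w} \<in> color_edges V bt c"
  then obtain i a b where e: "{z,w} = {(i,a),(i,b)}" "i < V" "{a,b} \<in> bubble_edges (bt i) c"
    unfolding color_edges_def by blast
  then have ab: "a < 4" "b < 4" using bubble_edges_subset by fastforce+
  have "b = mate (bt i) c a" "a = mate (bt i) c b"
    using e(3) mate_iff[OF assms ab(1)] mate_iff[OF assms ab(2)] by (auto simp: insert_commute mate_mate)
  then show "z \<in> bverts V \<and> w = bubble_mate bt c z"
    using e(1,2) ab by (auto simp: doubleton_eq_iff bubble_mate_def bverts_def)
next
  assume "z \<in> bverts V \<and> w = bubble_mate bt c z"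
  then obtain i a where "z = (i,a)" "i < V" "a < 4" "w = (i, mate (bt i) c a)"
    by (auto simp: bverts_def bubble_mate_def)
  then show "{z,w} \<in> color_edges V bt c"
    unfolding color_edges_def using mate_iff[OF assms] by blast
qed

lemma wf_graph_Diff: "wf_graph V bt L \<Longrightarrow> wf_graph V bt (L - M)"
  by (simp add: wf_graph_def)

lemma lines_subset_bverts: "wf_graph V bt L \<Longrightarrow> \<Union>L \<subseteq> bverts V"
  by (auto simp: wf_graph_def)

lemma finite_bverts: "finite (bverts V)"
  by (simp add: bverts_def)

lemma finite_lines: "wf_graph V bt L \<Longrightarrow> finite L"
  by (meson Pow_iff finite_Pow_iff finite_bverts finite_subset lines_subset_bverts subsetI
      Union_upper subset_trans)

definition line_partner :: "(nat \<times> nat) set set \<Rightarrow> nat \<times> nat \<Rightarrow> nat \<times> nat" where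
  "line_partner L z = (SOME w. {z,w} \<in> L)"

lemma line_unique:
  assumes "wf_graph V bt L" "{z,w} \<in> L" "{z,w'} \<in> L"
  shows "w = w'"
proof -
  have "z \<noteq> w" "z \<noteq> w'" "{z,w} = {z,w'}" using assms by (auto simp: wf_graph_def)
  then show ?thesis by (metis doubleton_eq_iff)
qed

lemma line_partner:
  assumes wf: "wf_graph V bt L" and z: "z \<in> \<Union>L"
  shows "{z, line_partner L z} \<in> L" "line_partner L z \<noteq> z"
    "line_partner L (line_partner L z) = z" "line_partner L z \<in> \<Union>L"
proof -
  obtain l where l: "l \<in> L" "z \<in> l" using z by blast
  have "card l = 2" using wf l by (auto simp: wf_graph_def)
  then obtain p q where "l = {p,q}" by (auto simp: card_2_iff)
  then have "{z, if z = p then q else p} \<in> L" using l by (auto simp: insert_commute)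
  then show zp: "{z, line_partner L z} \<in> L"
    unfolding line_partner_def by (rule someI)
  then show "line_partner L z \<noteq> z" using wf by (auto simp: wf_graph_def)
  have "{line_partner L z, z} \<in> L" using zp by (simp add: insert_commute)
  moreover from this have "{line_partner L z, line_partner L (line_partner L z)} \<in> L"
    unfolding line_partner_def by (rule someI)
  ultimately show "line_partner L (line_partner L z) = z" using line_unique[OF wf] by blast
  show "line_partner L z \<in> \<Union>L" using zp by blast
qed

lemma symp_face_adj: "symp (face_adj V bt L c)"
  by (auto simp: symp_def face_adj_def insert_commute)

lemma symp_col_adj: "symp (col_adj V bt L)"
  by (auto simp: symp_def col_adj_def insert_commute)

lemma face_adj_rtranclp_col_adj:
  assumes "c \<in> colors" "(face_adj V bt L c)\<^sup>*\<^sup>* u v"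
  shows "(col_adj V bt L)\<^sup>*\<^sup>* u v"
proof -
  have "face_adj V bt L c \<le> col_adj V bt L"
    using assms(1) by (auto simp: face_adj_def col_adj_def)
  from rtranclp_mono[OF this] assms(2) show ?thesis by (rule predicate2D)
qed

lemma finite_colors: "finite colors"
  by (simp add: colors_def)

definition face_of ::
    "nat \<Rightarrow> (nat \<Rightarrow> nat) \<Rightarrow> (nat \<times> nat) set set \<Rightarrow> nat \<Rightarrow> nat \<times> nat \<Rightarrow> (nat \<times> nat) set" where
  "face_of V bt L c x = component (bverts V) (face_adj V bt L c) x"

definition col_component ::
    "nat \<Rightarrow> (nat \<Rightarrow> nat) \<Rightarrow> (nat \<times> nat) set set \<Rightarrow> nat \<times> nat \<Rightarrow> (nat \<times> nat) set" where
  "col_component V bt L x = component (bverts V) (col_adj V bt L) x"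

definition internal_face_colors ::
    "nat \<Rightarrow> (nat \<Rightarrow> nat) \<Rightarrow> (nat \<times> nat) set set \<Rightarrow> nat \<times> nat \<Rightarrow> nat set" where
  "internal_face_colors V bt L x = {c \<in> colors. face_of V bt L c x \<inter> ext_verts V L = {}}"

definition n_components :: "nat \<Rightarrow> (nat \<Rightarrow> nat) \<Rightarrow> (nat \<times> nat) set set \<Rightarrow> nat" where
  "n_components V bt L = card (components (bverts V) (col_adj V bt L))"

definition n_closed_components :: "nat \<Rightarrow> (nat \<Rightarrow> nat) \<Rightarrow> (nat \<times> nat) set set \<Rightarrow> nat" where
  "n_closed_components V bt L =
     card (closed_components (bverts V) (col_adj V bt L) (ext_verts V L))"

lemma internal_faces_eq_closed_components:
  "internal_faces V bt L c = closed_components (bverts V) (face_adj V bt L c) (ext_verts V L)"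
  by (auto simp: internal_faces_def faces_def closed_components_def components_def component_def)

text \<open>The bubble edges of colour \<open>c\<close> pair off all vertices of a face and the lines pair off
  its internal ones.\<close>
lemma even_card_face_ext_verts:
  assumes wf: "wf_graph V bt L" and c: "c \<in> colors" and x: "x \<in> bverts V"
  shows "even (card (face_of V bt L c x \<inter> ext_verts V L))"
proof -
  let ?R = "face_adj V bt L c"
  let ?A = "component (bverts V) ?R x"
  have fin: "finite ?A" using finite_bverts by (simp add: component_def)
  have closed: "y \<in> ?A" if "z \<in> ?A" "?R z y" "y \<in> bverts V" for z y
    using that rtranclp.rtrancl_into_rtrancl by (fastforce simp: component_def)
  have "even (card ?A)"
  proof (rule even_card_involution[OF fin, of "bubble_mate bt c"])
    fix z assume z: "z \<in> ?A"
    then have zV: "z \<in> bverts V" by (simp add: component_def)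
    have "?R z (bubble_mate bt c z)" using color_edge_iff[OF c] zV by (simp add: face_adj_def)
    then show "bubble_mate bt c z \<in> ?A" using closed z bubble_mate[OF c zV] by blast
    show "bubble_mate bt c (bubble_mate bt c z) = z" "bubble_mate bt c z \<noteq> z"
      using bubble_mate[OF c zV] by auto
  qed
  moreover have "even (card (?A - ext_verts V L))"
  proof (rule even_card_involution[of _ "line_partner L"])
    fix z assume z: "z \<in> ?A - ext_verts V L"
    then have zL: "z \<in> \<Union>L" by (auto simp: component_def ext_verts_def)
    note partner = line_partner[OF wf zL]
    have "?R z (line_partner L z)" using partner(1) by (simp add: face_adj_def)
    moreover have "line_partner L z \<in> bverts V" "line_partner L z \<notin> ext_verts V L"
      using partner(4) lines_subset_bverts[OF wf] by (auto simp: ext_verts_def)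
    ultimately show "line_partner L z \<in> ?A - ext_verts V L" using closed z by blast
    show "line_partner L (line_partner L z) = z" "line_partner L z \<noteq> z"
      using partner by auto
  qed (use fin in simp)
  ultimately show ?thesis
    unfolding face_of_def using card_Int_Diff[OF fin, of "ext_verts V L"] by (metis even_add)
qed

lemma exists_line_closed_component_or_open_face:
  assumes wf: "wf_graph V bt L" and "L \<noteq> {}"
  shows "\<exists>x y. {x,y} \<in> L \<and> (col_component V bt L x \<inter> ext_verts V L = {}
           \<or> internal_face_colors V bt L x \<noteq> colors)"
proof -
  let ?E = "ext_verts V L" and ?C = "col_adj V bt L"
  obtain x0 y0 where l0: "{x0,y0} \<in> L"
    using assms by (fastforce simp: wf_graph_def card_2_iff)
  show ?thesis
  proof (cases "col_component V bt L x0 \<inter> ?E = {}")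
    case True
    then show ?thesis using l0 by blast
  next
    case False
    then obtain e where e: "?C\<^sup>*\<^sup>* x0 e" "e \<in> ?E" by (auto simp: col_component_def component_def)
    \<comment> \<open>The path from \<open>e\<close> back to \<open>x\<^sub>0\<close>, which lies on a line, has to leave \<open>?E\<close>;
      as external vertices carry no line, it does so along a bubble edge.\<close>
    have "\<exists>z c. z \<in> ?E \<and> c \<in> colors \<and> bubble_mate bt c z \<notin> ?E"
    proof (rule ccontr)
      assume no_exit: "\<not> ?thesis"
      have "?C\<^sup>*\<^sup>* e v \<Longrightarrow> v \<in> ?E" for v
      proof (induction rule: rtranclp_induct)
        case (step v v')
        then have "{v,v'} \<notin> L" by (auto simp: ext_verts_def)
        then obtain c where c: "c \<in> colors" "{v,v'} \<in> color_edges V bt c"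
          using step(2) by (auto simp: col_adj_def)
        then have "v' = bubble_mate bt c v" using color_edge_iff by blast
        then show ?case using no_exit step(3) c(1) by blast
      qed (use e in simp)
      moreover have "?C\<^sup>*\<^sup>* e x0" using e(1) symp_col_adj by (meson sympD symp_rtranclp)
      ultimately have "x0 \<in> ?E" by blast
      then show False using l0 by (auto simp: ext_verts_def)
    qed
    then obtain z c where z: "z \<in> ?E" "c \<in> colors" "bubble_mate bt c z \<notin> ?E" by blast
    let ?u = "bubble_mate bt c z"
    have zV: "z \<in> bverts V" using z(1) by (simp add: ext_verts_def)
    have uL: "?u \<in> \<Union>L" using bubble_mate(1)[OF z(2) zV] z(3) by (simp add: ext_verts_def)
    have "{z, ?u} \<in> color_edges V bt c" using color_edge_iff[OF z(2)] zV by simp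
    then have "face_adj V bt L c ?u z" by (simp add: face_adj_def insert_commute)
    then have "z \<in> face_of V bt L c ?u" using zV by (simp add: face_of_def component_def)
    then have "internal_face_colors V bt L ?u \<noteq> colors"
      using z by (auto simp: internal_face_colors_def)
    then show ?thesis using line_partner(1)[OF wf uL] by blast
  qed
qed

lemma ext_verts_remove_line:
  assumes wf: "wf_graph V bt L" and xy: "{x,y} \<in> L"
  shows "x \<in> ext_verts V (L - {{x,y}})" "y \<in> ext_verts V (L - {{x,y}})"
    "ext_verts V L = ext_verts V (L - {{x,y}}) - {x,y}"
proof -
  have "\<forall>l\<in>L. \<forall>l'\<in>L. l \<inter> l' \<noteq> {} \<longrightarrow> l = l'" using wf by (simp add: wf_graph_def)
  then have "l = {x,y}" if "l \<in> L" "x \<in> l \<or> y \<in> l" for l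
    using that xy by (metis disjoint_iff insertCI)
  moreover have "x \<in> bverts V" "y \<in> bverts V" using lines_subset_bverts[OF wf] xy by auto
  ultimately show "x \<in> ext_verts V (L - {{x,y}})" "y \<in> ext_verts V (L - {{x,y}})"
    by (auto simp: ext_verts_def)
  have "\<Union>L = \<Union>(L - {{x,y}}) \<union> {x,y}" using xy by blast
  then show "ext_verts V L = ext_verts V (L - {{x,y}}) - {x,y}"
    unfolding ext_verts_def by blast
qed

lemma edge_extension_remove_line:
  assumes wf: "wf_graph V bt L" and xy: "{x,y} \<in> L"
  shows "edge_extension (bverts V) (face_adj V bt (L - {{x,y}}) c) (face_adj V bt L c) x y"
    "edge_extension (bverts V) (col_adj V bt (L - {{x,y}})) (col_adj V bt L) x y"
proof -
  have xy_V: "x \<in> bverts V" "y \<in> bverts V" using lines_subset_bverts[OF wf] xy by auto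
  have split: "(s \<in> L \<or> P) \<longleftrightarrow> (s \<in> L - {{x,y}} \<or> P) \<or> s = {x,y}" for s P
    using xy by blast
  show "edge_extension (bverts V) (face_adj V bt (L - {{x,y}}) c) (face_adj V bt L c) x y"
    by (rule edge_extension.intro[OF symp_face_adj]) (simp_all only: face_adj_def split xy_V)
  show "edge_extension (bverts V) (col_adj V bt (L - {{x,y}})) (col_adj V bt L) x y"
    by (rule edge_extension.intro[OF symp_col_adj]) (simp_all only: col_adj_def split xy_V)
qed

lemma F_int_remove_line:
  assumes wf: "wf_graph V bt L" and xy: "{x,y} \<in> L"
  shows "F_int V bt L \<le> F_int V bt (L - {{x,y}}) + card (internal_face_colors V bt L x)"
proof -
  note ext = ext_verts_remove_line[OF assms]
  have "card (internal_faces V bt L c) \<le> card (internal_faces V bt (L - {{x,y}}) c)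
          + of_bool (face_of V bt L c x \<inter> ext_verts V L = {})" for c
    using edge_extension.card_closed_components_extended_le[OF
        edge_extension_remove_line(1)[OF assms] finite_bverts]
    unfolding internal_faces_eq_closed_components ext(3) face_of_def .
  then have "F_int V bt L \<le> (\<Sum>c\<in>colors. card (internal_faces V bt (L - {{x,y}}) c)
          + of_bool (face_of V bt L c x \<inter> ext_verts V L = {}))"
    unfolding F_int_def by (intro sum_mono)
  also have "\<dots> = F_int V bt (L - {{x,y}}) + card (internal_face_colors V bt L x)"
    using finite_colors
    by (simp add: F_int_def sum.distrib internal_face_colors_def Collect_conj_eq)
  finally show ?thesis .
qed

lemma face_meets_ext_verts_if_bridge:
  assumes wf: "wf_graph V bt L" and xy: "{x,y} \<in> L" and c: "c \<in> colors"
    and bridge: "\<not> (col_adj V bt (L - {{x,y}}))\<^sup>*\<^sup>* x y"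
  shows "face_of V bt L c x \<inter> ext_verts V L \<noteq> {}"
proof -
  let ?R = "face_adj V bt (L - {{x,y}}) c"
  let ?A = "component (bverts V) ?R x \<inter> ext_verts V (L - {{x,y}})"
  note ext = ext_verts_remove_line[OF wf xy]
  have xV: "x \<in> bverts V" using ext(1) by (simp add: ext_verts_def)
  have "x \<in> ?A" using ext(1) xV by (simp add: component_def)
  moreover have "?A \<noteq> {x}"
    using even_card_face_ext_verts[OF wf_graph_Diff[OF wf, of "{{x,y}}"] c xV]
    by (intro notI) (simp add: face_of_def)
  ultimately obtain z where z: "z \<in> ?A" "z \<noteq> x" by blast
  then have xz: "?R\<^sup>*\<^sup>* x z" and zV: "z \<in> bverts V" by (auto simp: component_def)
  have "z \<noteq> y" using face_adj_rtranclp_col_adj[OF c xz] bridge by blast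
  then have "z \<in> ext_verts V L" using z ext(3) by auto
  moreover have "(face_adj V bt L c)\<^sup>*\<^sup>* x z"
    using edge_extension.rtranclp_extended[OF edge_extension_remove_line(1)[OF wf xy] xz] .
  ultimately show ?thesis using zV by (auto simp: face_of_def component_def)
qed

lemma n_closed_components_remove_line:
  assumes wf: "wf_graph V bt L" and xy: "{x,y} \<in> L"
  shows "n_closed_components V bt (L - {{x,y}})
           + of_bool (col_component V bt L x \<inter> ext_verts V L = {})
         \<le> n_closed_components V bt L"
  using edge_extension.card_closed_components_extended_ge[OF
      edge_extension_remove_line(2)[OF assms] finite_bverts ext_verts_remove_line(1,2)[OF assms]]
  unfolding n_closed_components_def col_component_def ext_verts_remove_line(3)[OF assms] .

lemma n_components_remove_line:
  assumes wf: "wf_graph V bt L" and xy: "{x,y} \<in> L"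
  shows "n_components V bt (L - {{x,y}}) \<le> n_components V bt L + 1"
    "(col_adj V bt (L - {{x,y}}))\<^sup>*\<^sup>* x y
       \<Longrightarrow> n_components V bt (L - {{x,y}}) \<le> n_components V bt L"
  using edge_extension.card_components_le_Suc[OF edge_extension_remove_line(2)[OF assms]]
    edge_extension.card_components_le_if_connected[OF edge_extension_remove_line(2)[OF assms]]
  unfolding n_components_def by (simp_all add: finite_bverts)

lemma card_internal_face_colors_le:
  assumes "col_component V bt L x \<inter> ext_verts V L = {} \<or> internal_face_colors V bt L x \<noteq> colors"
  shows "card (internal_face_colors V bt L x)
           \<le> 2 + of_bool (col_component V bt L x \<inter> ext_verts V L = {})"
proof -
  have sub: "internal_face_colors V bt L x \<subseteq> colors" by (auto simp: internal_face_colors_def)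
  have card_colors: "card colors = 3" by (simp add: colors_def)
  show ?thesis
  proof (cases "internal_face_colors V bt L x = colors")
    case True
    then show ?thesis using assms card_colors by simp
  next
    case False
    with sub have "internal_face_colors V bt L x \<subset> colors" by blast
    from psubset_card_mono[OF finite_colors this] show ?thesis using card_colors by simp
  qed
qed

lemma F_int_le_lines_components:
  assumes "wf_graph V bt L"
  shows "F_int V bt L + 2 * n_components V bt {}
           \<le> 2 * card L + 2 * n_components V bt L + n_closed_components V bt L"
  using assms
proof (induction "card L" arbitrary: L rule: less_induct)
  case less
  note wf = less.prems
  show ?case
  proof (cases "L = {}")
    case True
    then show ?thesis
      by (simp add: F_int_def internal_faces_eq_closed_components ext_verts_def
          closed_components_self)
  next
    case False
    then obtain x y where xy: "{x,y} \<in> L"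
      and good: "col_component V bt L x \<inter> ext_verts V L = {} \<or> internal_face_colors V bt L x \<noteq> colors"
      using exists_line_closed_component_or_open_face[OF wf] by blast
    define L' where "L' = L - {{x,y}}"
    have card_L: "card L = card L' + 1"
      using card_Suc_Diff1[OF finite_lines[OF wf] xy] unfolding L'_def by simp
    have IH: "F_int V bt L' + 2 * n_components V bt {}
            \<le> 2 * card L' + 2 * n_components V bt L' + n_closed_components V bt L'"
      using less.hyps[of L'] card_L wf_graph_Diff[OF wf] unfolding L'_def by simp
    note F = F_int_remove_line[OF wf xy, folded L'_def]
      and K0 = n_closed_components_remove_line[OF wf xy, folded L'_def]
      and K = n_components_remove_line[OF wf xy, folded L'_def]
    show ?thesis
    proof (cases "(col_adj V bt L')\<^sup>*\<^sup>* x y")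
      case True
      then show ?thesis
        using IH F K0 K(2)[OF True] card_internal_face_colors_le[OF good] card_L by linarith
    next
      case False
      then have "internal_face_colors V bt L x = {}"
        using face_meets_ext_verts_if_bridge[OF wf xy] unfolding L'_def internal_face_colors_def
        by blast
      then show ?thesis using IH F K0 K(1) card_L by simp
    qed
  qed
qed

lemma n_components_no_lines: "V \<le> n_components V bt {}"
proof -
  let ?C = "col_adj V bt {}"
  have step: "fst u = fst v" if "?C u v" for u v
    using that by (auto simp: col_adj_def color_edges_def doubleton_eq_iff)
  have same_bubble: "fst u = fst v" if "?C\<^sup>*\<^sup>* u v" for u v
    using that by (induction rule: rtranclp_induct) (auto dest: step)
  have "inj_on (\<lambda>i. component (bverts V) ?C (i,0)) {0..<V}"
  proof (rule inj_onI)
    fix i j assume "j \<in> {0..<V}" and eq: "component (bverts V) ?C (i,0) = component (bverts V) ?C (j,0)"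
    then have "(j,0) \<in> component (bverts V) ?C (i,0)" by (simp add: component_def bverts_def)
    then show "i = j" using same_bubble by (fastforce simp: component_def)
  qed
  moreover have "(\<lambda>i. component (bverts V) ?C (i,0)) ` {0..<V} \<subseteq> components (bverts V) ?C"
    by (auto simp: components_def bverts_def)
  ultimately show ?thesis
    unfolding n_components_def
    using card_inj_on_le[OF _ _ finite_components[OF finite_bverts]] by fastforce
qed

lemma N_ext_add_card_lines: "wf_graph V bt L \<Longrightarrow> N_ext V L + 2 * card L = 4 * V"
proof -
  assume wf: "wf_graph V bt L"
  have sub: "\<Union>L \<subseteq> bverts V" using lines_subset_bverts[OF wf] .
  have "pairwise disjnt L" using wf unfolding wf_graph_def pairwise_def disjnt_def by blast
  moreover have "finite l" if "l \<in> L" for l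
    using that sub finite_bverts by (meson Union_upper finite_subset subset_trans)
  ultimately have "card (\<Union>L) = (\<Sum>l\<in>L. card l)" by (rule card_Union_disjoint)
  also have "\<dots> = 2 * card L" using wf by (simp add: wf_graph_def)
  finally have "card (\<Union>L) = 2 * card L" .
  moreover have "N_ext V L = card (bverts V) - card (\<Union>L)"
    unfolding N_ext_def ext_verts_def using card_Diff_subset[OF finite_subset[OF sub finite_bverts] sub] .
  moreover have "card (bverts V) = 4 * V" by (simp add: bverts_def)
  ultimately show ?thesis using card_mono[OF finite_bverts sub] by simp
qed

lemma F_int_add_N_ext_le:
  assumes wf: "wf_graph V bt L" and conn: "connected_graph V bt L" and ext: "N_ext V L \<noteq> 0"
  shows "F_int V bt L + N_ext V L \<le> 2 * V + 2"
proof -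
  have E: "ext_verts V L \<noteq> {}" "ext_verts V L \<subseteq> bverts V"
    using ext unfolding N_ext_def by (metis card.empty, auto simp: ext_verts_def)
  have "component (bverts V) (col_adj V bt L) z = bverts V" if "z \<in> bverts V" for z
    using conn that unfolding connected_graph_def component_def by blast
  then have "components (bverts V) (col_adj V bt L) = {bverts V}"
    using E unfolding components_def by auto
  then have "n_components V bt L = 1" "n_closed_components V bt L = 0"
    using E by (auto simp: n_components_def n_closed_components_def closed_components_def)
  then show ?thesis
    using F_int_le_lines_components[OF wf] n_components_no_lines[of V bt] N_ext_add_card_lines[OF wf]
    by linarith
qed

theorem theorem2:
  fixes V :: nat and bt :: "nat \<Rightarrow> nat" and L :: "(nat \<times> nat) set set"
  assumes "wf_graph V bt L"
    and "connected_graph V bt L"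
  shows "(N_ext V L \<ge> 6 \<longrightarrow> omega_deg V bt L \<le> - real (N_ext V L) / 12)
       \<and> (N_ext V L = 4 \<longrightarrow> omega_deg V bt L \<le> 0)
       \<and> (N_ext V L = 2 \<longrightarrow> omega_deg V bt L \<le> 1)"
proof -
  have "omega_deg V bt L \<le> 2 - real (N_ext V L) / 2" if "N_ext V L \<noteq> 0"
  proof -
    have "real (F_int V bt L + N_ext V L) \<le> real (2 * V + 2)"
      using F_int_add_N_ext_le[OF assms that] by (simp only: of_nat_le_iff)
    then show ?thesis unfolding omega_deg_def by simp
  qed
  then show ?thesis by force
qed

end
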